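(* Let $a\in\mathcal{T}_n\setminus\mathcal{S}_n$ with $\operatorname{rank}(a)=k$ and kernel of type $\lambda$, and let $G\le\mathcal{S}_n$. Then $(a,G)$ is an $\mathcal{S}_n$-pair if and only if $G$ is $k$-homogeneous and $G$ is $\lambda$-homogeneous.
   Context: $\Omega=\{1,\ldots,n\}$, $\mathcal{T}_n$ is the monoid of all maps $\Omega\to\Omega$, $\mathcal{S}_n$ the symmetric group. $\operatorname{rank}(a)=|\Omega a|$; the kernel of $a$ is the partition of $\Omega$ into the classes of $\{(x,y):xa=ya\}$, and its type is the non-increasing list of class sizes. $(a,G)$ is an $\mathcal{S}_n$-pair if $\langle a,G\rangle\setminus G=\langle a,\mathcal{S}_n\rangle\setminus\mathcal{S}_n$ (this notion is defined for non-invertible $a$). $G$ is $k$-homogeneous if transitive on $k$-subsets of $\Omega$. For a partition $\lambda$ of $n$, $G$ is $\lambda$-homogeneous if for any two ordered partitions $(A_1,A_2,\ldots)$, $(B_1,B_2,\ldots)$ of $\Omega$ with $|A_i|=|B_i|=\lambda_i$ there is $g\in G$ mapping the set of parts $\{A_1,A_2,\ldots\}$ onto $\{B_1,B_2,\ldots\}$. *)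

theory Defs
  imports "HOL-Combinatorics.Permutations" "HOL-Library.Multiset"
begin

text \<open>Omega = {1..n}. Maps Omega to Omega are represented as functions nat to nat
  that map {1..n} into itself and are the identity outside {1..n}.\<close>

definition Tn :: "nat \<Rightarrow> (nat \<Rightarrow> nat) set" where
  "Tn n = {f. f ` {1..n} \<subseteq> {1..n} \<and> (\<forall>x. x \<notin> {1..n} \<longrightarrow> f x = x)}"

definition Sn :: "nat \<Rightarrow> (nat \<Rightarrow> nat) set" where
  "Sn n = {p. p permutes {1..n}}"

definition is_subgroup_Sn :: "nat \<Rightarrow> (nat \<Rightarrow> nat) set \<Rightarrow> bool" where
  "is_subgroup_Sn n G \<longleftrightarrow> G \<subseteq> Sn n \<and> id \<in> G \<and>
     (\<forall>g\<in>G. \<forall>h\<in>G. g \<circ> h \<in> G) \<and> (\<forall>g\<in>G. inv g \<in> G)"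

inductive_set gen :: "('a \<Rightarrow> 'a) set \<Rightarrow> ('a \<Rightarrow> 'a) set" for X where
  base: "f \<in> X \<Longrightarrow> f \<in> gen X"
| comp: "f \<in> gen X \<Longrightarrow> g \<in> gen X \<Longrightarrow> f \<circ> g \<in> gen X"

definition Sn_pair :: "nat \<Rightarrow> (nat \<Rightarrow> nat) \<Rightarrow> (nat \<Rightarrow> nat) set \<Rightarrow> bool" where
  "Sn_pair n a G \<longleftrightarrow> gen (insert a G) - G = gen (insert a (Sn n)) - Sn n"

definition rank :: "nat \<Rightarrow> (nat \<Rightarrow> nat) \<Rightarrow> nat" where
  "rank n a = card (a ` {1..n})"

definition kernel_classes :: "nat \<Rightarrow> (nat \<Rightarrow> nat) \<Rightarrow> nat set set" where
  "kernel_classes n a = {{y \<in> {1..n}. a y = a x} | x. x \<in> {1..n}}"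

definition kernel_type :: "nat \<Rightarrow> (nat \<Rightarrow> nat) \<Rightarrow> nat list" where
  "kernel_type n a = rev (sorted_list_of_multiset (image_mset card (mset_set (kernel_classes n a))))"

definition k_homogeneous :: "nat \<Rightarrow> nat \<Rightarrow> (nat \<Rightarrow> nat) set \<Rightarrow> bool" where
  "k_homogeneous n k G \<longleftrightarrow> (\<forall>A B. A \<subseteq> {1..n} \<and> B \<subseteq> {1..n} \<and> card A = k \<and> card B = k
      \<longrightarrow> (\<exists>g\<in>G. g ` A = B))"

definition ordered_partition :: "nat \<Rightarrow> nat list \<Rightarrow> nat set list \<Rightarrow> bool" where
  "ordered_partition n lam As \<longleftrightarrow> length As = length lam \<and>
     (\<forall>i<length As. card (As ! i) = lam ! i \<and> As ! i \<subseteq> {1..n}) \<and>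
     (\<forall>i<length As. \<forall>j<length As. i \<noteq> j \<longrightarrow> As ! i \<inter> As ! j = {}) \<and>
     \<Union>(set As) = {1..n}"

definition lambda_homogeneous :: "nat \<Rightarrow> nat list \<Rightarrow> (nat \<Rightarrow> nat) set \<Rightarrow> bool" where
  "lambda_homogeneous n lam G \<longleftrightarrow> (\<forall>As Bs. ordered_partition n lam As \<and> ordered_partition n lam Bs
      \<longrightarrow> (\<exists>g\<in>G. (\<lambda>A. g ` A) ` set As = set Bs))"

end

(*
  Every element of <a, G> outside G is a word containing a; cutting it at its last and at its
  first letter a writes it as u a g and as h a v with g, h in G.  So its kernel is coarser than
  that of some a g, and its image lies in some h (a Omega).  If (a, G) is an S_n-pair, this applies
  to every s a t with s, t in S_n: comparing ranks, G carries the image of a to every k-set and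
  the kernel of a to every partition of type lambda, which is k- and lambda-homogeneity.

  Conversely, homogeneity yields h a g in <a, G> with any prescribed k-set as image and any
  prescribed partition of type lambda as kernel.  When the image is a transversal of the kernel,
  h a g permutes its image, so one of its powers is the idempotent with that kernel and image.
  Composing such idempotents on the left of a rank-k element moves one point of its image to a
  point outside; these moves generate all transpositions, hence all of S_n acting on the left,
  so s a t lies in <a, G> for all s, t and <a, S_n> \ S_n is contained in <a, G> \ G.
*)

theory Submission
  imports Defs
begin

lemma permutes_extend_bij_betw:
  assumes "finite S" and f: "bij_betw f A B" and "A \<subseteq> S" and "B \<subseteq> S"
  obtains p where "p permutes S" and "\<And>x. x \<in> A \<Longrightarrow> p x = f x"
proof -
  have "finite A" "finite B" using assms finite_subset by auto
  moreover have "card A = card B" using f bij_betw_same_card by blast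
  ultimately have "card (S - A) = card (S - B)"
    using assms(3,4) by (simp add: card_Diff_subset)
  then obtain h where h: "bij_betw h (S - A) (S - B)"
    using finite_same_card_bij assms(1) by blast
  define p where "p x = (if x \<in> S then (if x \<in> A then f x else h x) else x)" for x
  have b: "bij_betw (\<lambda>x. if x \<in> A then f x else h x) (A \<union> (S - A)) (B \<union> (S - B))"
    by (rule bij_betw_disjoint_Un[OF f h]) blast+
  have e: "A \<union> (S - A) = S" "B \<union> (S - B) = S" using assms by auto
  have "bij_betw p S S"
    using b unfolding e by (rule bij_betw_cong[THEN iffD1, rotated]) (simp add: p_def)
  then have "p permutes S" by (rule bij_imp_permutes) (simp add: p_def)
  moreover have "p x = f x" if "x \<in> A" for x using that assms by (auto simp: p_def)
  ultimately show ?thesis by (rule that)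
qed

lemma disjoint_family_on_nth_Cons:
  assumes "disjoint_family_on (nth (A # As)) {..<length (A # As)}"
  shows "disjoint_family_on (nth As) {..<length As}" and "A \<inter> \<Union>(set As) = {}"
proof -
  show "disjoint_family_on (nth As) {..<length As}"
    unfolding disjoint_family_on_def
  proof (intro ballI impI)
    fix i j assume "i \<in> {..<length As}" "j \<in> {..<length As}" "i \<noteq> j"
    with assms[unfolded disjoint_family_on_def, rule_format, of "Suc i" "Suc j"]
    show "As ! i \<inter> As ! j = {}" by simp
  qed
  show "A \<inter> \<Union>(set As) = {}"
  proof (rule ccontr)
    assume "A \<inter> \<Union>(set As) \<noteq> {}"
    then obtain x j where "x \<in> A" "j < length As" "x \<in> As ! j" by (auto simp: in_set_conv_nth)
    with assms[unfolded disjoint_family_on_def, rule_format, of 0 "Suc j"] show False by auto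
  qed
qed

lemma bij_betw_parts:
  assumes "length As = length Bs"
    and "\<forall>i<length As. finite (As ! i) \<and> finite (Bs ! i) \<and> card (As ! i) = card (Bs ! i)"
    and "disjoint_family_on (nth As) {..<length As}" and "disjoint_family_on (nth Bs) {..<length Bs}"
  shows "\<exists>f. bij_betw f (\<Union>(set As)) (\<Union>(set Bs)) \<and> (\<forall>i<length As. f ` (As ! i) = Bs ! i)"
  using assms
proof (induction As Bs rule: list_induct2)
  case Nil
  then show ?case by (auto simp: bij_betw_def)
next
  case (Cons A As B Bs)
  have "finite A" "finite B" "card A = card B" using Cons.prems(1) by auto
  then obtain h where h: "bij_betw h A B" using finite_same_card_bij by blast
  have dA: "A \<inter> \<Union>(set As) = {}" and dB: "B \<inter> \<Union>(set Bs) = {}"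
    using disjoint_family_on_nth_Cons(2) Cons.prems(2,3) by blast+
  have "\<forall>i<length As. finite (As ! i) \<and> finite (Bs ! i) \<and> card (As ! i) = card (Bs ! i)"
    using Cons.prems(1) by auto
  from Cons.IH[OF this disjoint_family_on_nth_Cons(1)[OF Cons.prems(2)]
      disjoint_family_on_nth_Cons(1)[OF Cons.prems(3)]]
  obtain f where f: "bij_betw f (\<Union>(set As)) (\<Union>(set Bs))" "\<forall>i<length As. f ` (As ! i) = Bs ! i"
    by blast
  define F where "F = (\<lambda>x. if x \<in> A then h x else f x)"
  have "bij_betw F (\<Union>(set (A # As))) (\<Union>(set (B # Bs)))"
    using bij_betw_disjoint_Un[OF h f(1) dA dB] by (simp add: F_def)
  moreover have "F ` ((A # As) ! i) = (B # Bs) ! i" if "i < length (A # As)" for i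
  proof (cases i)
    case 0
    have "F ` A = h ` A" by (simp add: F_def)
    then show ?thesis using h 0 by (simp add: bij_betw_def)
  next
    case (Suc j)
    with that have j: "j < length As" by simp
    then have "As ! j \<inter> A = {}" using dA nth_mem by blast
    then have "F ` (As ! j) = f ` (As ! j)" by (auto simp: F_def)
    then show ?thesis using Suc f(2) j by simp
  qed
  ultimately show ?case by blast
qed

lemma card_image_comp_inj: "inj p \<Longrightarrow> card ((p \<circ> f) ` S) = card (f ` S)"
  by (metis card_image image_comp inj_on_subset subset_UNIV)

lemma image_image_comp: "image (g \<circ> h) ` X = image g ` image h ` X"
  by (simp add: image_comp image_image)

lemma image_inv_image_permutes:
  assumes "p permutes S"
  shows "image (inv p) ` (image p ` X) = X"
  by (simp add: image_comp permutes_inv_o(2)[OF assms])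

lemma transversal_through:
  assumes "u \<in> S"
  obtains R where "R \<subseteq> S" and "u \<in> R" and "bij_betw f R (f ` S)"
proof -
  define g where "g w = (if w = f u then u else inv_into S f w)" for w
  have g: "g w \<in> S \<and> f (g w) = w" if "w \<in> f ` S" for w
    using that assms by (auto simp: g_def inv_into_into f_inv_into_f)
  define R where "R = g ` f ` S"
  have "R \<subseteq> S" using g by (auto simp: R_def)
  moreover have "u \<in> R" unfolding R_def using assms by (auto simp: g_def image_iff)
  moreover have "bij_betw f R (f ` S)"
    by (rule bij_betw_byWitness[where f' = g]) (use g in \<open>auto simp: R_def\<close>)
  ultimately show ?thesis by (rule that)
qed

section \<open>Generated semigroups and idempotent powers\<close>

lemma gen_mono:
  assumes "X \<subseteq> Y"
  shows "gen X \<subseteq> gen Y"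
proof
  fix f assume "f \<in> gen X"
  then show "f \<in> gen Y" by induction (use assms in \<open>blast intro: gen.intros\<close>)+
qed

lemma gen_insert_subset:
  assumes "\<And>g h. g \<in> H \<Longrightarrow> h \<in> H \<Longrightarrow> g \<circ> h \<in> H"
    and "a \<in> M"
    and "\<And>h f. h \<in> H \<Longrightarrow> f \<in> M \<Longrightarrow> h \<circ> f \<in> M"
    and "\<And>h f. h \<in> H \<Longrightarrow> f \<in> M \<Longrightarrow> f \<circ> h \<in> M"
    and "\<And>f f'. f \<in> M \<Longrightarrow> f' \<in> M \<Longrightarrow> f \<circ> f' \<in> M"
  shows "gen (insert a H) \<subseteq> H \<union> M"
proof
  fix f assume "f \<in> gen (insert a H)"
  then show "f \<in> H \<union> M" by induction (use assms in blast)+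
qed

lemma funpow_Suc_in_gen: "c \<in> gen X \<Longrightarrow> c ^^ Suc m \<in> gen X"
  by (induction m) (auto intro: gen.comp)

lemma funpow_periodic:
  fixes c :: "'a \<Rightarrow> 'a"
  assumes "c ^^ i = c ^^ j" and "i < j"
  shows "c ^^ (i + x + t * (j - i)) = c ^^ (i + x)"
proof (induction t)
  case (Suc t)
  have "i + x + Suc t * (j - i) = (x + t * (j - i)) + j" using assms(2) by simp
  then have "c ^^ (i + x + Suc t * (j - i)) = c ^^ (x + t * (j - i)) \<circ> c ^^ i"
    by (simp only: funpow_add assms(1))
  also have "\<dots> = c ^^ (i + x + t * (j - i))"
    by (simp only: funpow_add[symmetric]) (simp add: ac_simps)
  finally show ?case using Suc.IH by simp
qed simp

lemma funpow_idempotent_exists: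
  fixes c :: "'a \<Rightarrow> 'a"
  assumes "finite (range (\<lambda>m. c ^^ m))"
  obtains m where "m \<ge> 1" and "c ^^ m \<circ> c ^^ m = c ^^ m"
proof -
  have "\<not> inj (\<lambda>m::nat. c ^^ m)" using assms finite_imageD infinite_UNIV_nat by blast
  then obtain i j :: nat where "i < j" "c ^^ i = c ^^ j"
    unfolding inj_def by (metis linorder_neqE_nat)
  \<comment> \<open>a multiple of the period \<open>j - i\<close> beyond the preperiod \<open>i\<close>\<close>
  define m where "m = (i + 1) * (j - i)"
  have "(i + 1) * 1 \<le> (i + 1) * (j - i)" using \<open>i < j\<close> by (intro mult_le_mono2) simp
  then have "m \<ge> i + 1" by (simp add: m_def)
  have "m + m = i + (m - i) + (i + 1) * (j - i)" using \<open>m \<ge> i + 1\<close> by (simp add: m_def)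
  then have "c ^^ m \<circ> c ^^ m = c ^^ (i + (m - i) + (i + 1) * (j - i))"
    by (simp only: funpow_add[symmetric])
  also have "\<dots> = c ^^ m"
    using funpow_periodic[OF \<open>c ^^ i = c ^^ j\<close> \<open>i < j\<close>, of "m - i" "i + 1"] \<open>m \<ge> i + 1\<close> by simp
  finally show ?thesis using that[of m] \<open>m \<ge> i + 1\<close> by simp
qed

section \<open>Kernels and images of transformations\<close>

lemma Tn_comp: "f \<in> Tn n \<Longrightarrow> g \<in> Tn n \<Longrightarrow> f \<circ> g \<in> Tn n"
  unfolding Tn_def by (auto simp: image_subset_iff)

lemma id_in_Tn: "id \<in> Tn n"
  unfolding Tn_def by simp

lemma Tn_image_subset: "f \<in> Tn n \<Longrightarrow> f ` {1..n} \<subseteq> {1..n}"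
  unfolding Tn_def by blast

lemma Tn_outside: "f \<in> Tn n \<Longrightarrow> x \<notin> {1..n} \<Longrightarrow> f x = x"
  unfolding Tn_def by blast

lemma permutes_in_Tn: "p permutes {1..n} \<Longrightarrow> p \<in> Tn n"
  unfolding Tn_def using permutes_image permutes_not_in by fastforce

lemma gen_subset_Tn:
  assumes "X \<subseteq> Tn n"
  shows "gen X \<subseteq> Tn n"
proof
  fix f assume "f \<in> gen X"
  then show "f \<in> Tn n" by induction (use assms Tn_comp in blast)+
qed

lemma finite_Tn: "finite (Tn n)"
proof -
  have "inj_on (\<lambda>f. restrict f {1..n}) (Tn n)"
  proof (rule inj_onI)
    fix f g assume fg: "f \<in> Tn n" "g \<in> Tn n" "restrict f {1..n} = restrict g {1..n}"
    show "f = g"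
    proof
      fix x show "f x = g x"
      proof (cases "x \<in> {1..n}")
        case True then show ?thesis by (metis fg(3) restrict_apply')
      next
        case False then show ?thesis using Tn_outside[OF fg(1) False] Tn_outside[OF fg(2) False] by simp
      qed
    qed
  qed
  moreover have "(\<lambda>f. restrict f {1..n}) ` Tn n \<subseteq> {1..n} \<rightarrow>\<^sub>E {1..n}"
    using Tn_image_subset by (auto simp: restrict_PiE_iff image_subset_iff)
  then have "finite ((\<lambda>f. restrict f {1..n}) ` Tn n)"
    by (rule finite_subset) (simp add: finite_PiE)
  ultimately show ?thesis by (rule finite_imageD[rotated])
qed

lemma funpow_in_Tn: "c \<in> Tn n \<Longrightarrow> c ^^ m \<in> Tn n"
  by (induction m) (simp_all add: id_in_Tn Tn_comp)

lemma kernel_classes_image: "kernel_classes n f = (\<lambda>x. {y \<in> {1..n}. f y = f x}) ` {1..n}"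
  unfolding kernel_classes_def by (rule Setcompr_eq_image)

lemma finite_kernel_classes: "finite (kernel_classes n f)"
  unfolding kernel_classes_image by simp

lemma kernel_classes_eq_iff:
  "kernel_classes n f = kernel_classes n g \<longleftrightarrow> (\<forall>x\<in>{1..n}. \<forall>y\<in>{1..n}. f x = f y \<longleftrightarrow> g x = g y)"
proof
  assume eq: "kernel_classes n f = kernel_classes n g"
  show "\<forall>x\<in>{1..n}. \<forall>y\<in>{1..n}. f x = f y \<longleftrightarrow> g x = g y"
  proof (intro ballI)
    fix x y assume x: "x \<in> {1..n}" and y: "y \<in> {1..n}"
    have "{z \<in> {1..n}. f z = f x} \<in> kernel_classes n g"
      using eq x unfolding kernel_classes_image by blast
    then obtain w where "{z \<in> {1..n}. f z = f x} = {z \<in> {1..n}. g z = g w}"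
      unfolding kernel_classes_image by blast
    then have "g x = g w" and "f y = f x \<longleftrightarrow> g y = g w" using x y by blast+
    then show "f x = f y \<longleftrightarrow> g x = g y" by metis
  qed
next
  assume "\<forall>x\<in>{1..n}. \<forall>y\<in>{1..n}. f x = f y \<longleftrightarrow> g x = g y"
  then show "kernel_classes n f = kernel_classes n g"
    unfolding kernel_classes_image by (intro image_cong) auto
qed

lemma kernel_classes_inj_comp: "inj h \<Longrightarrow> kernel_classes n (h \<circ> f) = kernel_classes n f"
  by (simp add: kernel_classes_eq_iff inj_eq)

lemma kernel_classes_comp_permutes:
  assumes p: "p permutes {1..n}"
  shows "kernel_classes n (f \<circ> p) = image (inv p) ` kernel_classes n f"
proof -
  have inv: "p (inv p z) = z" "inv p (p z) = z" for z
    using permutes_inverses[OF p] by auto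
  have mem: "p z \<in> {1..n} \<longleftrightarrow> z \<in> {1..n}" "inv p z \<in> {1..n} \<longleftrightarrow> z \<in> {1..n}" for z
    using permutes_in_image[OF p] permutes_in_image[OF permutes_inv[OF p]] by auto
  have "{y \<in> {1..n}. f (p y) = f (p x)} = inv p ` {z \<in> {1..n}. f z = f (p x)}" for x
  proof
    show "{y \<in> {1..n}. f (p y) = f (p x)} \<subseteq> inv p ` {z \<in> {1..n}. f z = f (p x)}"
    proof
      fix y assume "y \<in> {y \<in> {1..n}. f (p y) = f (p x)}"
      then have "inv p (p y) \<in> inv p ` {z \<in> {1..n}. f z = f (p x)}" using mem by simp
      then show "y \<in> inv p ` {z \<in> {1..n}. f z = f (p x)}" using inv by simp
    qed
    show "inv p ` {z \<in> {1..n}. f z = f (p x)} \<subseteq> {y \<in> {1..n}. f (p y) = f (p x)}"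
      using inv mem by auto
  qed
  then have "kernel_classes n (f \<circ> p) = (\<lambda>x. inv p ` {y \<in> {1..n}. f y = f (p x)}) ` {1..n}"
    unfolding kernel_classes_image by simp
  also have "\<dots> = (\<lambda>z. inv p ` {y \<in> {1..n}. f y = f z}) ` (p ` {1..n})"
    by (simp add: image_image)
  also have "\<dots> = image (inv p) ` kernel_classes n f"
    unfolding permutes_image[OF p] kernel_classes_image image_image ..
  finally show ?thesis .
qed

lemma same_kernel_if_refines_card_eq:
  assumes "finite S" and refines: "\<forall>x\<in>S. \<forall>y\<in>S. f x = f y \<longrightarrow> g x = g y"
    and "card (f ` S) = card (g ` S)" and "x \<in> S" and "y \<in> S"
  shows "f x = f y \<longleftrightarrow> g x = g y"
proof -
  define \<phi> where "\<phi> z = g (inv_into S f z)" for z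
  have g: "g z = \<phi> (f z)" if "z \<in> S" for z
  proof -
    have "inv_into S f (f z) \<in> S" "f (inv_into S f (f z)) = f z"
      using that by (auto intro: inv_into_into f_inv_into_f)
    then show ?thesis using refines that unfolding \<phi>_def by metis
  qed
  have "g ` S = \<phi> ` f ` S" using g by (simp add: image_image cong: image_cong)
  then have inj: "inj_on \<phi> (f ` S)"
    using assms(1,3) by (simp add: eq_card_imp_inj_on)
  show ?thesis
  proof
    assume "g x = g y"
    then have "\<phi> (f x) = \<phi> (f y)" using g assms(4,5) by metis
    then show "f x = f y" using inj_onD[OF inj] assms(4,5) by blast
  qed (use refines assms(4,5) in blast)
qed

lemma permutes_comp_if_same_kernel:
  assumes f: "f \<in> Tn n" and c: "c \<in> Tn n" and ker: "kernel_classes n f = kernel_classes n c"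
  obtains \<pi> where "\<pi> permutes {1..n}" and "f = \<pi> \<circ> c"
proof -
  have ker_iff: "f x = f y \<longleftrightarrow> c x = c y" if "x \<in> {1..n}" "y \<in> {1..n}" for x y
    using ker that by (simp add: kernel_classes_eq_iff)
  define \<psi> where "\<psi> w = f (inv_into {1..n} c w)" for w
  have \<psi>: "\<psi> (c z) = f z" if "z \<in> {1..n}" for z
  proof -
    have "c z \<in> c ` {1..n}" using that by blast
    then have "inv_into {1..n} c (c z) \<in> {1..n}" "c (inv_into {1..n} c (c z)) = c z"
      by (rule inv_into_into, rule f_inv_into_f)
    then show ?thesis using ker_iff that unfolding \<psi>_def by metis
  qed
  have "bij_betw \<psi> (c ` {1..n}) (f ` {1..n})"
  proof (rule bij_betw_imageI)
    show "inj_on \<psi> (c ` {1..n})"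
      by (rule inj_onI) (auto simp: \<psi> ker_iff)
    show "\<psi> ` c ` {1..n} = f ` {1..n}"
      unfolding image_image by (rule image_cong[OF refl \<psi>])
  qed
  then obtain \<pi> where \<pi>: "\<pi> permutes {1..n}" "\<And>w. w \<in> c ` {1..n} \<Longrightarrow> \<pi> w = \<psi> w"
    using permutes_extend_bij_betw Tn_image_subset[OF c] Tn_image_subset[OF f] by (metis finite_atLeastAtMost)
  have "f = \<pi> \<circ> c"
  proof
    fix z show "f z = (\<pi> \<circ> c) z"
    proof (cases "z \<in> {1..n}")
      case True then show ?thesis using \<pi>(2) \<psi> by simp
    next
      case False then show ?thesis
        using Tn_outside[OF f False] Tn_outside[OF c False] permutes_not_in[OF \<pi>(1) False] by simp
    qed
  qed
  with \<pi>(1) show ?thesis by (rule that)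
qed

lemma idempotent_eq_funpow:
  assumes cT: "c \<in> Tn n" and b: "b \<in> Tn n" and bb: "b \<circ> b = b"
    and ker: "kernel_classes n c = kernel_classes n b" and img: "c ` {1..n} = b ` {1..n}"
  obtains m where "b = c ^^ Suc m"
proof -
  define T where "T = b ` {1..n}"
  have TO: "T \<subseteq> {1..n}" using Tn_image_subset[OF b] by (simp add: T_def)
  have b_fix: "b t = t" if "t \<in> T" for t
    using that bb unfolding T_def by (metis comp_apply imageE)
  have c_iff: "c x = c y \<longleftrightarrow> b x = b y" if "x \<in> {1..n}" "y \<in> {1..n}" for x y
    using ker that by (simp add: kernel_classes_eq_iff)
  \<comment> \<open>T meets each kernel class of c once and is the image of c, so c permutes T;
    then an idempotent power of c fixes T and has the kernel of c, so it is b\<close>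
  have "inj_on c T" by (rule inj_onI) (metis TO b_fix c_iff subsetD)
  moreover have "c ` T \<subseteq> T" using img TO unfolding T_def by blast
  ultimately have cTT: "c ` T = T"
    using TO by (metis card_image card_subset_eq finite_atLeastAtMost finite_subset)
  have powT: "(c ^^ m) ` T = T" for m
  proof (induction m)
    case (Suc m)
    have "(c ^^ Suc m) ` T = c ` ((c ^^ m) ` T)" by (simp add: image_image)
    then show ?case using Suc cTT by simp
  qed simp
  have "range (\<lambda>m. c ^^ m) \<subseteq> Tn n" using funpow_in_Tn[OF cT] by blast
  then obtain m where m: "m \<ge> 1" "c ^^ m \<circ> c ^^ m = c ^^ m"
    using funpow_idempotent_exists finite_subset[OF _ finite_Tn] by metis
  define e where "e = c ^^ m"
  have e_fix: "e t = t" if "t \<in> T" for t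
    using that powT[of m] m(2) unfolding e_def by (metis comp_apply imageE)
  have e_eq: "e = c ^^ (m - 1) \<circ> c"
    using m(1) unfolding e_def by (metis Suc_diff_le diff_Suc_1 funpow_Suc_right)
  have "e = b"
  proof
    fix z show "e z = b z"
    proof (cases "z \<in> {1..n}")
      case True
      have "b z \<in> T" using True by (simp add: T_def)
      moreover have "c (b z) = c z" using True \<open>b z \<in> T\<close> TO b_fix c_iff by blast
      ultimately show ?thesis using e_fix e_eq by (metis comp_apply)
    next
      case False
      then show ?thesis using e_def b cT funpow_in_Tn Tn_outside by metis
    qed
  qed
  then show ?thesis using that[of "m - 1"] m(1) by (simp add: e_def)
qed

section \<open>Ordered partitions and \<open>\<lambda>\<close>-homogeneity\<close>

lemma list_of_mset_set_image:
  assumes "finite K" and "image_mset f (mset_set K) = mset L"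
  shows "\<exists>Ks. distinct Ks \<and> set Ks = K \<and> map f Ks = L"
  using assms
proof (induction L arbitrary: K)
  case Nil
  then show ?case by (intro exI[of _ "[]"]) (simp add: mset_set_empty_iff)
next
  case (Cons l L)
  then have "l \<in> f ` K" by (metis finite_set_mset_mset_set list.set_intros(1) mset_map
        set_image_mset set_mset_mset)
  then obtain x where x: "x \<in> K" "f x = l" by blast
  have "image_mset f (mset_set (K - {x})) = mset L"
    using Cons.prems mset_set.remove[OF Cons.prems(1) x(1)] x(2) by simp
  then obtain Ks where "distinct Ks" "set Ks = K - {x}" "map f Ks = L"
    using Cons.IH[of "K - {x}"] Cons.prems(1) by blast
  then show ?case using x by (intro exI[of _ "x # Ks"]) auto
qed

lemma ordered_partition_of_kernel_classes:
  obtains Ks where "ordered_partition n (kernel_type n f) Ks" and "set Ks = kernel_classes n f"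
proof -
  have "mset (kernel_type n f) = image_mset card (mset_set (kernel_classes n f))"
    unfolding kernel_type_def by simp
  then obtain Ks where Ks: "distinct Ks" "set Ks = kernel_classes n f" "map card Ks = kernel_type n f"
    using list_of_mset_set_image[OF finite_kernel_classes] by metis
  have "ordered_partition n (kernel_type n f) Ks"
    unfolding ordered_partition_def
  proof (intro conjI allI impI)
    show "length Ks = length (kernel_type n f)" using Ks(3) by (metis length_map)
    fix i assume i: "i < length Ks"
    show "card (Ks ! i) = kernel_type n f ! i" using nth_map[OF i, of card] Ks(3) by simp
    show "Ks ! i \<subseteq> {1..n}" using i Ks(2) nth_mem unfolding kernel_classes_image by blast
    fix j assume "j < length Ks" "i \<noteq> j"
    then have "Ks ! i \<noteq> Ks ! j" using i Ks(1) by (simp add: nth_eq_iff_index_eq)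
    moreover have "Ks ! i \<in> kernel_classes n f" "Ks ! j \<in> kernel_classes n f"
      using i \<open>j < length Ks\<close> Ks(2) nth_mem by blast+
    ultimately show "Ks ! i \<inter> Ks ! j = {}" unfolding kernel_classes_image by auto
  next
    show "\<Union>(set Ks) = {1..n}" using Ks(2) unfolding kernel_classes_image by auto
  qed
  then show ?thesis using that Ks(2) by blast
qed

lemma ordered_partition_image:
  assumes Ks: "ordered_partition n lam Ks" and p: "p permutes {1..n}"
  shows "ordered_partition n lam (map (image p) Ks)"
  unfolding ordered_partition_def
proof (intro conjI allI impI)
  have inj: "inj p" using permutes_inj[OF p] .
  show "length (map (image p) Ks) = length lam" using Ks by (simp add: ordered_partition_def)
  fix i assume "i < length (map (image p) Ks)"
  then have i: "i < length Ks" by simp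
  show "card (map (image p) Ks ! i) = lam ! i"
    using Ks i card_image[OF inj_on_subset[OF inj subset_UNIV]] by (simp add: ordered_partition_def)
  have "Ks ! i \<subseteq> {1..n}" using Ks i by (simp add: ordered_partition_def)
  then have "p ` (Ks ! i) \<subseteq> p ` {1..n}" by (rule image_mono)
  then show "map (image p) Ks ! i \<subseteq> {1..n}" using permutes_image[OF p] i by simp
  fix j assume "j < length (map (image p) Ks)" "i \<noteq> j"
  then have "Ks ! i \<inter> Ks ! j = {}" using Ks i by (simp add: ordered_partition_def)
  then show "map (image p) Ks ! i \<inter> map (image p) Ks ! j = {}"
    using i \<open>j < length (map (image p) Ks)\<close> image_Int[OF inj, of "Ks ! i" "Ks ! j"] by simp
next
  have "\<Union>(set Ks) = {1..n}" using Ks by (simp add: ordered_partition_def)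
  then have "\<Union>(set (map (image p) Ks)) = p ` {1..n}" by auto
  then show "\<Union>(set (map (image p) Ks)) = {1..n}" using permutes_image[OF p] by simp
qed

lemma ordered_partitions_permutes:
  assumes A: "ordered_partition n lam As" and B: "ordered_partition n lam Bs"
  obtains p where "p permutes {1..n}" and "image p ` set As = set Bs"
proof -
  have len: "length As = length Bs" using A B by (simp add: ordered_partition_def)
  have "\<forall>i<length As. finite (As ! i) \<and> finite (Bs ! i) \<and> card (As ! i) = card (Bs ! i)"
    using A B unfolding ordered_partition_def by (metis finite_atLeastAtMost finite_subset)
  moreover have "disjoint_family_on (nth As) {..<length As}" "disjoint_family_on (nth Bs) {..<length Bs}"
    using A B unfolding ordered_partition_def disjoint_family_on_def by auto
  ultimately obtain f where f: "bij_betw f (\<Union>(set As)) (\<Union>(set Bs))" "\<forall>i<length As. f ` (As ! i) = Bs ! i"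
    using bij_betw_parts[OF len] by blast
  have U: "\<Union>(set As) = {1..n}" "\<Union>(set Bs) = {1..n}" using A B by (simp_all add: ordered_partition_def)
  obtain p where p: "p permutes {1..n}" "\<And>x. x \<in> {1..n} \<Longrightarrow> p x = f x"
    using permutes_extend_bij_betw[of "{1..n}" f "{1..n}" "{1..n}"] f(1) U by auto
  have "p ` (As ! i) = Bs ! i" if "i < length As" for i
  proof -
    have "As ! i \<subseteq> {1..n}" using A that by (simp add: ordered_partition_def)
    then have "p ` (As ! i) = f ` (As ! i)" using p(2) by (intro image_cong) auto
    then show ?thesis using f(2) that by simp
  qed
  then have "map (image p) As = Bs" using len by (intro nth_equalityI) auto
  then have "image p ` set As = set Bs" by (metis set_map)
  with p(1) show ?thesis by (rule that)
qed

lemma subgroup_permutes: "is_subgroup_Sn n G \<Longrightarrow> g \<in> G \<Longrightarrow> g permutes {1..n}"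
  by (auto simp: is_subgroup_Sn_def Sn_def)

lemma kernel_orbit_if_lambda_homogeneous:
  assumes G: "is_subgroup_Sn n G" and hom: "lambda_homogeneous n (kernel_type n f) G"
    and \<sigma>: "\<sigma> permutes {1..n}"
  obtains g where "g \<in> G" and "kernel_classes n (f \<circ> g) = kernel_classes n (f \<circ> \<sigma>)"
proof -
  obtain Ks where Ks: "ordered_partition n (kernel_type n f) Ks" "set Ks = kernel_classes n f"
    using ordered_partition_of_kernel_classes by blast
  define As where "As = map (image (inv \<sigma>)) Ks"
  have "ordered_partition n (kernel_type n f) As"
    unfolding As_def by (rule ordered_partition_image[OF Ks(1) permutes_inv[OF \<sigma>]])
  from hom[unfolded lambda_homogeneous_def, rule_format, OF conjI[OF this Ks(1)]]
  obtain g where g: "g \<in> G" "image g ` set As = set Ks" by blast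
  have "kernel_classes n (f \<circ> g) = image (inv g) ` image g ` set As"
    using kernel_classes_comp_permutes[OF subgroup_permutes[OF G g(1)]] g(2) Ks(2) by simp
  also have "\<dots> = kernel_classes n (f \<circ> \<sigma>)"
    using image_inv_image_permutes[OF subgroup_permutes[OF G g(1)]] kernel_classes_comp_permutes[OF \<sigma>] Ks(2)
    by (simp add: As_def)
  finally show ?thesis using g(1) that by blast
qed

lemma lambda_homogeneous_if_kernel_orbit:
  assumes G: "is_subgroup_Sn n G"
    and orbit: "\<And>\<sigma>. \<sigma> permutes {1..n} \<Longrightarrow> \<exists>g\<in>G. kernel_classes n (f \<circ> g) = kernel_classes n (f \<circ> \<sigma>)"
  shows "lambda_homogeneous n (kernel_type n f) G"
proof -
  note G_perm = subgroup_permutes[OF G]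
  obtain Ks where Ks: "ordered_partition n (kernel_type n f) Ks" "set Ks = kernel_classes n f"
    using ordered_partition_of_kernel_classes by blast
  have to_kernel: "\<exists>g\<in>G. image g ` set As = kernel_classes n f"
    if As: "ordered_partition n (kernel_type n f) As" for As
  proof -
    obtain \<sigma> where \<sigma>: "\<sigma> permutes {1..n}" "image \<sigma> ` set As = set Ks"
      using ordered_partitions_permutes[OF As Ks(1)] by blast
    obtain g where g: "g \<in> G" "kernel_classes n (f \<circ> g) = kernel_classes n (f \<circ> \<sigma>)"
      using orbit[OF \<sigma>(1)] by blast
    have "kernel_classes n (f \<circ> \<sigma>) = set As"
      using kernel_classes_comp_permutes[OF \<sigma>(1)] image_inv_image_permutes[OF \<sigma>(1)] \<sigma>(2) Ks(2)
      by metis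
    then have "image g ` set As = image g ` image (inv g) ` kernel_classes n f"
      using g(2) kernel_classes_comp_permutes[OF G_perm[OF g(1)]] by simp
    also have "\<dots> = kernel_classes n f"
      using image_inv_image_permutes[OF permutes_inv[OF G_perm[OF g(1)]]]
        permutes_inv_inv[OF G_perm[OF g(1)]] by simp
    finally show ?thesis using g(1) by blast
  qed
  show ?thesis
    unfolding lambda_homogeneous_def
  proof (intro allI impI)
    fix As Bs
    assume AB: "ordered_partition n (kernel_type n f) As \<and> ordered_partition n (kernel_type n f) Bs"
    obtain gA where gA: "gA \<in> G" "image gA ` set As = kernel_classes n f"
      using to_kernel[OF conjunct1[OF AB]] by blast
    obtain gB where gB: "gB \<in> G" "image gB ` set Bs = kernel_classes n f"
      using to_kernel[OF conjunct2[OF AB]] by blast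
    have "image (inv gB \<circ> gA) ` set As = image (inv gB) ` image gB ` set Bs"
      unfolding image_image_comp using gA(2) gB(2) by simp
    also have "\<dots> = set Bs" by (rule image_inv_image_permutes[OF G_perm[OF gB(1)]])
    finally show "\<exists>g\<in>G. image g ` set As = set Bs"
      using G gA(1) gB(1) unfolding is_subgroup_Sn_def by blast
  qed
qed

section \<open>The semigroup generated by a singular map and a group\<close>

locale singular_map_group =
  fixes n :: nat and a :: "nat \<Rightarrow> nat" and G :: "(nat \<Rightarrow> nat) set"
  assumes a_in_Tn: "a \<in> Tn n" and a_notin_Sn: "a \<notin> Sn n" and subgroup: "is_subgroup_Sn n G"
begin

lemma G_comp: "g \<in> G \<Longrightarrow> h \<in> G \<Longrightarrow> g \<circ> h \<in> G"
  using subgroup by (simp add: is_subgroup_Sn_def)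

lemma G_inv: "g \<in> G \<Longrightarrow> inv g \<in> G"
  using subgroup by (simp add: is_subgroup_Sn_def)

lemma G_id: "id \<in> G"
  using subgroup by (simp add: is_subgroup_Sn_def)

lemma G_subset_Sn: "G \<subseteq> Sn n"
  using subgroup by (simp add: is_subgroup_Sn_def)

lemma G_permutes: "g \<in> G \<Longrightarrow> g permutes {1..n}"
  by (rule subgroup_permutes[OF subgroup])

lemma insert_a_G_subset_Tn: "insert a G \<subseteq> Tn n"
  using a_in_Tn G_permutes permutes_in_Tn by blast

lemma not_inj_on_a: "\<not> inj_on a {1..n}"
proof
  assume inj: "inj_on a {1..n}"
  then have "a ` {1..n} = {1..n}"
    using card_subset_eq[OF _ Tn_image_subset[OF a_in_Tn]] card_image[OF inj] by simp
  with inj have "bij_betw a {1..n} {1..n}" by (simp add: bij_betw_def)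
  then have "a permutes {1..n}" by (rule bij_imp_permutes) (rule Tn_outside[OF a_in_Tn])
  then show False using a_notin_Sn by (simp add: Sn_def)
qed

lemma card_image_a_less: "card (a ` {1..n}) < n"
proof -
  have "card (a ` {1..n}) \<le> card {1..n}" by (rule card_image_le) simp
  moreover have "card (a ` {1..n}) \<noteq> card {1..n}"
    using not_inj_on_a eq_card_imp_inj_on[of "{1..n}" a] by auto
  ultimately show ?thesis by simp
qed

lemma perm_a_perm_notin_Sn:
  assumes "\<sigma> permutes {1..n}" and "\<tau> permutes {1..n}"
  shows "\<sigma> \<circ> a \<circ> \<tau> \<notin> Sn n"
proof
  assume "\<sigma> \<circ> a \<circ> \<tau> \<in> Sn n"
  then have "inj_on ((\<sigma> \<circ> a) \<circ> \<tau>) {1..n}" by (simp add: Sn_def permutes_inj_on)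
  then have "inj_on (\<sigma> \<circ> a) (\<tau> ` {1..n})" by (rule inj_on_imageI)
  then have "inj_on a {1..n}" using permutes_image[OF assms(2)] inj_on_imageI2 by metis
  then show False using not_inj_on_a by simp
qed

lemma perm_a_perm_in_gen_Sn:
  "\<sigma> permutes {1..n} \<Longrightarrow> \<tau> permutes {1..n} \<Longrightarrow> \<sigma> \<circ> a \<circ> \<tau> \<in> gen (insert a (Sn n))"
  by (intro gen.comp gen.base) (auto simp: Sn_def)

lemma gen_a_G_right_factor:
  assumes "f \<in> gen (insert a G)" and "f \<notin> G"
  obtains u g where "g \<in> G" and "f = u \<circ> a \<circ> g"
proof -
  let ?M = "{u \<circ> a \<circ> g | (u :: nat \<Rightarrow> nat) g. g \<in> G}"
  have "gen (insert a G) \<subseteq> G \<union> ?M"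
  proof (rule gen_insert_subset[OF G_comp])
    have "a = id \<circ> a \<circ> id" by simp
    then show "a \<in> ?M" using G_id by blast
  next
    fix h f assume "h \<in> G" "f \<in> ?M"
    then obtain u g where "g \<in> G" "f = u \<circ> a \<circ> g" by blast
    then have "h \<circ> f = (h \<circ> u) \<circ> a \<circ> g" "f \<circ> h = u \<circ> a \<circ> (g \<circ> h)" by (simp_all add: comp_assoc)
    then show "h \<circ> f \<in> ?M" "f \<circ> h \<in> ?M" using \<open>g \<in> G\<close> G_comp[OF \<open>g \<in> G\<close> \<open>h \<in> G\<close>] by blast+
  next
    fix f f' assume "f \<in> ?M" "f' \<in> ?M"
    then obtain u g u' g' where "f = u \<circ> a \<circ> g" "g' \<in> G" "f' = u' \<circ> a \<circ> g'" by blast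
    then have "f \<circ> f' = (u \<circ> a \<circ> g \<circ> u') \<circ> a \<circ> g'" by (simp add: comp_assoc)
    then show "f \<circ> f' \<in> ?M" using \<open>g' \<in> G\<close> by blast
  qed
  then show ?thesis using assms that by blast
qed

lemma gen_a_G_left_factor:
  assumes "f \<in> gen (insert a G)" and "f \<notin> G"
  obtains h v where "h \<in> G" and "v \<in> Tn n" and "f = h \<circ> a \<circ> v"
proof -
  let ?M = "{h \<circ> a \<circ> v | h v. h \<in> G \<and> v \<in> Tn n}"
  have G_Tn: "g \<in> Tn n" if "g \<in> G" for g using G_permutes[OF that] by (rule permutes_in_Tn)
  have "gen (insert a G) \<subseteq> G \<union> ?M"
  proof (rule gen_insert_subset[OF G_comp])
    have "a = id \<circ> a \<circ> id" by simp
    then show "a \<in> ?M" using G_id id_in_Tn by blast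
  next
    fix g f assume "g \<in> G" "f \<in> ?M"
    then obtain h v where "h \<in> G" "v \<in> Tn n" "f = h \<circ> a \<circ> v" by blast
    then have "g \<circ> f = (g \<circ> h) \<circ> a \<circ> v" "f \<circ> g = h \<circ> a \<circ> (v \<circ> g)" by (simp_all add: comp_assoc)
    moreover have "g \<circ> h \<in> G" "v \<circ> g \<in> Tn n"
      using G_comp \<open>g \<in> G\<close> \<open>h \<in> G\<close> Tn_comp \<open>v \<in> Tn n\<close> G_Tn by blast+
    ultimately show "g \<circ> f \<in> ?M" "f \<circ> g \<in> ?M" using \<open>h \<in> G\<close> \<open>v \<in> Tn n\<close> by blast+
  next
    fix f f' assume "f \<in> ?M" "f' \<in> ?M"
    then obtain h v h' v' where "h \<in> G" "v \<in> Tn n" "f = h \<circ> a \<circ> v" "h' \<in> G" "v' \<in> Tn n" "f' = h' \<circ> a \<circ> v'"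
      by blast
    then have "f \<circ> f' = h \<circ> a \<circ> (v \<circ> h' \<circ> a \<circ> v')" by (simp add: comp_assoc)
    moreover have "v \<circ> h' \<circ> a \<circ> v' \<in> Tn n"
      using Tn_comp \<open>v \<in> Tn n\<close> G_Tn[OF \<open>h' \<in> G\<close>] a_in_Tn \<open>v' \<in> Tn n\<close> by metis
    ultimately show "f \<circ> f' \<in> ?M" using \<open>h \<in> G\<close> by blast
  qed
  then show ?thesis using assms that by blast
qed

lemma Sn_pair_perm_a_perm:
  assumes "Sn_pair n a G" and "\<sigma> permutes {1..n}" and "\<tau> permutes {1..n}"
  shows "\<sigma> \<circ> a \<circ> \<tau> \<in> gen (insert a G)" and "\<sigma> \<circ> a \<circ> \<tau> \<notin> G"
  using assms(1) perm_a_perm_in_gen_Sn[OF assms(2,3)] perm_a_perm_notin_Sn[OF assms(2,3)]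
  unfolding Sn_pair_def by blast+

lemma Sn_pair_image_orbit:
  assumes pair: "Sn_pair n a G" and A: "A \<subseteq> {1..n}" "card A = card (a ` {1..n})"
  shows "\<exists>h\<in>G. h ` a ` {1..n} = A"
proof -
  have "finite A" using A(1) finite_subset by blast
  then obtain \<psi> where \<psi>: "bij_betw \<psi> (a ` {1..n}) A"
    using finite_same_card_bij[of "a ` {1..n}" A] A(2) by auto
  obtain \<sigma> where \<sigma>: "\<sigma> permutes {1..n}" "\<And>x. x \<in> a ` {1..n} \<Longrightarrow> \<sigma> x = \<psi> x"
    using permutes_extend_bij_betw[OF _ \<psi> Tn_image_subset[OF a_in_Tn] A(1)] by blast
  obtain h v where h: "h \<in> G" "v \<in> Tn n" "\<sigma> \<circ> a \<circ> id = h \<circ> a \<circ> v"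
    using gen_a_G_left_factor Sn_pair_perm_a_perm[OF pair \<sigma>(1) permutes_id] by metis
  have "A = \<sigma> ` a ` {1..n}"
    using \<sigma>(2) \<psi> by (simp add: bij_betw_def cong: image_cong)
  also have "\<dots> = h ` a ` v ` {1..n}" using h(3) by (metis comp_id image_comp)
  also have "\<dots> \<subseteq> h ` a ` {1..n}" using Tn_image_subset[OF h(2)] by (intro image_mono)
  finally have "A \<subseteq> h ` a ` {1..n}" .
  moreover have "card (h ` a ` {1..n}) = card A"
    using card_image[OF permutes_inj_on[OF G_permutes[OF h(1)]]] A(2) by simp
  ultimately have "A = h ` a ` {1..n}" by (simp add: card_subset_eq)
  then show ?thesis using h(1) by blast
qed

lemma Sn_pair_k_homogeneous:
  assumes "Sn_pair n a G"
  shows "k_homogeneous n (card (a ` {1..n})) G"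
  unfolding k_homogeneous_def
proof (intro allI impI)
  fix A B
  assume "A \<subseteq> {1..n} \<and> B \<subseteq> {1..n} \<and> card A = card (a ` {1..n}) \<and> card B = card (a ` {1..n})"
  then obtain hA hB where hA: "hA \<in> G" "hA ` a ` {1..n} = A" and hB: "hB \<in> G" "hB ` a ` {1..n} = B"
    using Sn_pair_image_orbit[OF assms] by meson
  have "(hB \<circ> inv hA) ` A = hB ` (inv hA ` hA ` a ` {1..n})" using hA(2) by (simp add: image_comp)
  also have "\<dots> = B" using image_inv_f_f[OF permutes_inj[OF G_permutes[OF hA(1)]]] hB(2) by simp
  finally show "\<exists>g\<in>G. g ` A = B" using G_comp[OF hB(1) G_inv[OF hA(1)]] by blast
qed

lemma Sn_pair_kernel_orbit:
  assumes pair: "Sn_pair n a G" and \<sigma>: "\<sigma> permutes {1..n}"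
  shows "\<exists>g\<in>G. kernel_classes n (a \<circ> g) = kernel_classes n (a \<circ> \<sigma>)"
proof -
  obtain u g where g: "g \<in> G" "id \<circ> a \<circ> \<sigma> = u \<circ> a \<circ> g"
    using gen_a_G_right_factor Sn_pair_perm_a_perm[OF pair permutes_id \<sigma>] by metis
  have "\<forall>x\<in>{1..n}. \<forall>y\<in>{1..n}. (a \<circ> g) x = (a \<circ> g) y \<longrightarrow> (a \<circ> \<sigma>) x = (a \<circ> \<sigma>) y"
    using g(2) by (metis comp_apply id_comp)
  moreover have "card ((a \<circ> g) ` {1..n}) = card ((a \<circ> \<sigma>) ` {1..n})"
    unfolding image_comp[symmetric] permutes_image[OF G_permutes[OF g(1)]] permutes_image[OF \<sigma>] ..
  ultimately have "kernel_classes n (a \<circ> g) = kernel_classes n (a \<circ> \<sigma>)"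
    unfolding kernel_classes_eq_iff using same_kernel_if_refines_card_eq[of "{1..n}"] by blast
  then show ?thesis using g(1) by blast
qed

lemma Sn_pair_lambda_homogeneous:
  assumes "Sn_pair n a G"
  shows "lambda_homogeneous n (kernel_type n a) G"
  by (rule lambda_homogeneous_if_kernel_orbit[OF subgroup Sn_pair_kernel_orbit[OF assms]])

lemma gen_minus_G_subset: "gen (insert a G) - G \<subseteq> gen (insert a (Sn n)) - Sn n"
proof
  fix f assume f: "f \<in> gen (insert a G) - G"
  then obtain h v where h: "h \<in> G" "v \<in> Tn n" "f = h \<circ> a \<circ> v"
    using gen_a_G_left_factor by blast
  have "card (f ` {1..n}) \<le> card (h ` a ` {1..n})"
    using Tn_image_subset[OF h(2)] h(3) by (intro card_mono) (auto simp: image_comp[symmetric])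
  also have "\<dots> \<le> card (a ` {1..n})" by (rule card_image_le) simp
  finally have "f \<notin> Sn n"
    using card_image_a_less by (auto simp: Sn_def permutes_image)
  moreover have "f \<in> gen (insert a (Sn n))"
    using f gen_mono[of "insert a G" "insert a (Sn n)"] G_subset_Sn by blast
  ultimately show "f \<in> gen (insert a (Sn n)) - Sn n" by blast
qed

lemma permutes_onto_transversal:
  assumes T: "T \<subseteq> {1..n}" "card T = card (a ` {1..n})" and x: "x \<in> {1..n}" "x \<notin> T" and y: "y \<in> T"
  obtains \<pi> where "\<pi> permutes {1..n}" and "bij_betw (a \<circ> \<pi>) T (a ` {1..n})" and "a (\<pi> x) = a (\<pi> y)"
proof -
  obtain u v where uv: "u \<in> {1..n}" "v \<in> {1..n}" "u \<noteq> v" "a u = a v"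
    using not_inj_on_a unfolding inj_on_def by blast
  obtain R where R: "R \<subseteq> {1..n}" "u \<in> R" "bij_betw a R (a ` {1..n})"
    using transversal_through[OF uv(1)] by blast
  have "v \<notin> R" using uv R(2) inj_onD[OF bij_betw_imp_inj_on[OF R(3)]] by metis
  have "card (T - {y}) = card (R - {u})"
    using T y R bij_betw_same_card finite_subset by (metis card_Diff_singleton finite_atLeastAtMost)
  then obtain h where h: "bij_betw h (T - {y}) (R - {u})"
    using finite_same_card_bij T(1) R(1) by (metis finite_Diff finite_atLeastAtMost finite_subset)
  have "bij_betw (\<lambda>z. if z = y then u else v) {y, x} {u, v}"
    using x y uv(3) by (auto simp: bij_betw_def inj_on_def)
  then have "bij_betw (\<lambda>z. if z \<in> {y, x} then (if z = y then u else v) else h z)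
      ({y, x} \<union> (T - {y})) ({u, v} \<union> (R - {u}))"
    by (rule bij_betw_disjoint_Un[OF _ h]) (use x \<open>v \<notin> R\<close> in auto)
  moreover have "{y, x} \<union> (T - {y}) \<subseteq> {1..n}" "{u, v} \<union> (R - {u}) \<subseteq> {1..n}"
    using T(1) x y uv R(1) by auto
  ultimately obtain \<pi> where \<pi>: "\<pi> permutes {1..n}"
    "\<And>z. z \<in> {y, x} \<union> (T - {y}) \<Longrightarrow> \<pi> z = (if z \<in> {y, x} then (if z = y then u else v) else h z)"
    by (rule permutes_extend_bij_betw[OF finite_atLeastAtMost]) blast
  have "\<pi> ` T = R"
  proof -
    have "\<pi> ` (T - {y}) = h ` (T - {y})" using \<pi>(2) x(2) by (intro image_cong) auto
    then have "\<pi> ` T = insert (\<pi> y) (R - {u})" using h y by (metis bij_betw_imp_surj_on image_insert insert_Diff)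
    then show ?thesis using \<pi>(2)[of y] R(2) by auto
  qed
  then have "bij_betw \<pi> T R" using permutes_inj_on[OF \<pi>(1)] by (rule bij_betw_imageI[rotated])
  then have bij: "bij_betw (a \<circ> \<pi>) T (a ` {1..n})" using R(3) by (rule bij_betw_trans)
  have "a (\<pi> x) = a (\<pi> y)" using \<pi>(2)[of x] \<pi>(2)[of y] x(2) y uv(4) by auto
  with \<pi>(1) bij show ?thesis by (rule that)
qed

end

section \<open>Homogeneity makes every \<open>\<sigma> \<circ> a \<circ> \<tau>\<close> reachable\<close>

locale homogeneous_pair = singular_map_group +
  assumes k_homogeneous: "k_homogeneous n (card (a ` {1..n})) G"
    and lambda_homogeneous: "lambda_homogeneous n (kernel_type n a) G"
begin

lemma image_orbit:
  assumes "A \<subseteq> {1..n}" and "card A = card (a ` {1..n})"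
  obtains h where "h \<in> G" and "h ` a ` {1..n} = A"
  using k_homogeneous[unfolded k_homogeneous_def, rule_format, of "a ` {1..n}" A]
    Tn_image_subset[OF a_in_Tn] assms that by blast

lemma idempotent_perm_a_perm_in_gen:
  assumes \<sigma>: "\<sigma> permutes {1..n}" and \<tau>: "\<tau> permutes {1..n}"
    and idem: "(\<sigma> \<circ> a \<circ> \<tau>) \<circ> (\<sigma> \<circ> a \<circ> \<tau>) = \<sigma> \<circ> a \<circ> \<tau>"
  shows "\<sigma> \<circ> a \<circ> \<tau> \<in> gen (insert a G)"
proof -
  obtain g where g: "g \<in> G" "kernel_classes n (a \<circ> g) = kernel_classes n (a \<circ> \<tau>)"
    by (rule kernel_orbit_if_lambda_homogeneous[OF subgroup lambda_homogeneous \<tau>])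
  have "\<sigma> ` a ` {1..n} \<subseteq> \<sigma> ` {1..n}" using Tn_image_subset[OF a_in_Tn] by (rule image_mono)
  then have "\<sigma> ` a ` {1..n} \<subseteq> {1..n}" by (simp only: permutes_image[OF \<sigma>])
  moreover have "card (\<sigma> ` a ` {1..n}) = card (a ` {1..n})"
    using card_image[OF permutes_inj_on[OF \<sigma>]] .
  ultimately obtain h where h: "h \<in> G" "h ` a ` {1..n} = \<sigma> ` a ` {1..n}"
    using image_orbit by blast
  have c: "h \<circ> a \<circ> g \<in> gen (insert a G)" using h(1) g(1) by (intro gen.comp gen.base) auto
  have "kernel_classes n (h \<circ> a \<circ> g) = kernel_classes n (\<sigma> \<circ> a \<circ> \<tau>)"
    using kernel_classes_inj_comp[OF permutes_inj[OF G_permutes[OF h(1)]], where f = "a \<circ> g"]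
      kernel_classes_inj_comp[OF permutes_inj[OF \<sigma>], where f = "a \<circ> \<tau>"] g(2)
    by (simp add: comp_assoc)
  moreover have "(h \<circ> a \<circ> g) ` {1..n} = (\<sigma> \<circ> a \<circ> \<tau>) ` {1..n}"
    unfolding image_comp[symmetric] permutes_image[OF G_permutes[OF g(1)]] permutes_image[OF \<tau>] h(2) ..
  moreover have "\<sigma> \<circ> a \<circ> \<tau> \<in> Tn n"
    using Tn_comp permutes_in_Tn[OF \<sigma>] a_in_Tn permutes_in_Tn[OF \<tau>] by metis
  moreover have "h \<circ> a \<circ> g \<in> Tn n" using c gen_subset_Tn[OF insert_a_G_subset_Tn] by blast
  ultimately obtain m where "\<sigma> \<circ> a \<circ> \<tau> = (h \<circ> a \<circ> g) ^^ Suc m"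
    using idempotent_eq_funpow[OF _ _ idem] by metis
  then show ?thesis using funpow_Suc_in_gen[OF c] by simp
qed

lemma idempotent_onto_in_gen:
  assumes T: "T \<subseteq> {1..n}" "card T = card (a ` {1..n})" and x: "x \<in> {1..n}" "x \<notin> T" and y: "y \<in> T"
  obtains b where "b \<in> gen (insert a G)" and "b \<in> Tn n" and "b x = y" and "\<And>t. t \<in> T \<Longrightarrow> b t = t"
proof -
  obtain \<pi> where \<pi>: "\<pi> permutes {1..n}" "bij_betw (a \<circ> \<pi>) T (a ` {1..n})" "a (\<pi> x) = a (\<pi> y)"
    using permutes_onto_transversal[OF T x y] by blast
  obtain \<sigma> where \<sigma>: "\<sigma> permutes {1..n}" "\<And>w. w \<in> a ` {1..n} \<Longrightarrow> \<sigma> w = inv_into T (a \<circ> \<pi>) w"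
    by (rule permutes_extend_bij_betw[OF finite_atLeastAtMost bij_betw_inv_into[OF \<pi>(2)]
          Tn_image_subset[OF a_in_Tn] T(1)]) blast
  define b where "b = \<sigma> \<circ> a \<circ> \<pi>"
  have a\<pi>: "a (\<pi> z) \<in> a ` {1..n}" if "z \<in> {1..n}" for z
    using permutes_in_image[OF \<pi>(1)] that by blast
  have b_fix: "b t = t" if "t \<in> T" for t
  proof -
    have "b t = inv_into T (a \<circ> \<pi>) ((a \<circ> \<pi>) t)"
      using \<sigma>(2) a\<pi> T(1) that by (auto simp: b_def)
    also have "\<dots> = t" using inv_into_f_f[OF bij_betw_imp_inj_on[OF \<pi>(2)] that] .
    finally show ?thesis .
  qed
  have b_into: "b z \<in> T" if "z \<in> {1..n}" for z
  proof -
    have "a (\<pi> z) \<in> (a \<circ> \<pi>) ` T" using a\<pi>[OF that] bij_betw_imp_surj_on[OF \<pi>(2)] by simp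
    then show ?thesis using \<sigma>(2)[OF a\<pi>[OF that]] by (simp add: b_def inv_into_into)
  qed
  have b_Tn: "b \<in> Tn n"
    unfolding b_def using Tn_comp permutes_in_Tn[OF \<sigma>(1)] a_in_Tn permutes_in_Tn[OF \<pi>(1)] by metis
  have "b \<circ> b = b"
  proof
    fix z show "(b \<circ> b) z = b z"
    proof (cases "z \<in> {1..n}")
      case True then show ?thesis using b_fix[OF b_into[OF True]] by simp
    next
      case False then show ?thesis using Tn_outside[OF b_Tn False] by simp
    qed
  qed
  then have "b \<in> gen (insert a G)" unfolding b_def by (rule idempotent_perm_a_perm_in_gen[OF \<sigma>(1) \<pi>(1)])
  moreover have "b x = y" using b_fix[OF y] \<pi>(3) by (simp add: b_def)
  ultimately show ?thesis using that[OF _ b_Tn _ b_fix] by blast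
qed

lemma transpose_out_of_image_in_gen:
  assumes c: "c \<in> gen (insert a G)" and ck: "card (c ` {1..n}) = card (a ` {1..n})"
    and x: "x \<in> c ` {1..n}" and y: "y \<in> {1..n}" "y \<notin> c ` {1..n}"
  shows "Transposition.transpose x y \<circ> c \<in> gen (insert a G)"
proof -
  define T where "T = insert y (c ` {1..n} - {x})"
  have c_Tn: "c \<in> Tn n" using c gen_subset_Tn[OF insert_a_G_subset_Tn] by blast
  have I: "c ` {1..n} \<subseteq> {1..n}" using Tn_image_subset[OF c_Tn] .
  have "x \<in> {1..n}" "x \<noteq> y" using x y I by auto
  have "T \<subseteq> {1..n}" using I y(1) by (auto simp: T_def)
  moreover have "card T = card (a ` {1..n})"
  proof -
    have "finite (c ` {1..n})" using finite_subset[OF I] by simp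
    moreover have "card (c ` {1..n}) > 0" using x calculation card_gt_0_iff by blast
    ultimately show ?thesis using ck x y(2) by (simp add: T_def card_insert_if)
  qed
  moreover have "x \<notin> T" "y \<in> T" using \<open>x \<noteq> y\<close> by (auto simp: T_def)
  ultimately obtain b where b: "b \<in> gen (insert a G)" "b \<in> Tn n" "b x = y" "\<And>t. t \<in> T \<Longrightarrow> b t = t"
    using idempotent_onto_in_gen \<open>x \<in> {1..n}\<close> by metis
  have "b \<circ> c = Transposition.transpose x y \<circ> c"
  proof
    fix z show "(b \<circ> c) z = (Transposition.transpose x y \<circ> c) z"
    proof (cases "z \<in> {1..n}")
      case True
      then have cz: "c z \<in> c ` {1..n}" by blast
      show ?thesis
      proof (cases "c z = x")
        case True then show ?thesis using b(3) by simp
      next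
        case False
        then have "c z \<in> T" "c z \<noteq> y" using cz y(2) by (auto simp: T_def)
        then show ?thesis using b(4) False by (simp add: Transposition.transpose_def)
      qed
    next
      case False
      then show ?thesis
        using Tn_outside[OF c_Tn False] Tn_outside[OF b(2) False] \<open>x \<in> {1..n}\<close> y(1) by auto
    qed
  qed
  then show ?thesis using gen.comp[OF b(1) c] by simp
qed

lemma transpose_within_image_in_gen:
  assumes c: "c \<in> gen (insert a G)" and ck: "card (c ` {1..n}) = card (a ` {1..n})"
    and x: "x \<in> c ` {1..n}" and y: "y \<in> c ` {1..n}" and "x \<noteq> y"
  shows "Transposition.transpose x y \<circ> c \<in> gen (insert a G)"
proof -
  define I where "I = c ` {1..n}"
  have I: "I \<subseteq> {1..n}"
    using Tn_image_subset c gen_subset_Tn[OF insert_a_G_subset_Tn] by (auto simp: I_def)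
  have img: "(Transposition.transpose p q \<circ> d) ` {1..n} = Transposition.transpose p q ` d ` {1..n}"
    for p q and d :: "nat \<Rightarrow> nat"
    by (rule image_comp[symmetric])
  have card: "card ((Transposition.transpose p q \<circ> d) ` {1..n}) = card (d ` {1..n})" for p q d
    by (rule card_image_comp_inj[OF inj_transpose])
  have "card I < card {1..n}" using ck card_image_a_less by (simp add: I_def)
  then obtain j where j: "j \<in> {1..n}" "j \<notin> I"
    using I by (metis card_mono finite_atLeastAtMost leD subsetI subset_antisym)
  have xy: "x \<in> {1..n}" "y \<in> {1..n}" using x y I by (auto simp: I_def)
  have "j \<noteq> x" "j \<noteq> y" using x y j(2) by (auto simp: I_def)
  \<comment> \<open>(x y) = (j y) (y x) (x j), and each factor moves a point of the current image outside it\<close>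
  define c1 where "c1 = Transposition.transpose x j \<circ> c"
  define c2 where "c2 = Transposition.transpose y x \<circ> c1"
  have I1: "c1 ` {1..n} = Transposition.transpose x j ` I" unfolding c1_def img I_def ..
  have I2: "c2 ` {1..n} = Transposition.transpose y x ` c1 ` {1..n}" unfolding c2_def img ..
  have ck1: "card (c1 ` {1..n}) = card (a ` {1..n})" unfolding c1_def card by (rule ck)
  have ck2: "card (c2 ` {1..n}) = card (a ` {1..n})" unfolding c2_def card by (rule ck1)
  have c1: "c1 \<in> gen (insert a G)"
    unfolding c1_def using transpose_out_of_image_in_gen[OF c ck x j(1)] j(2) by (simp add: I_def)
  have "y \<in> c1 ` {1..n}" "x \<notin> c1 ` {1..n}"
    unfolding I1 in_transpose_image_iff using y j(2) \<open>x \<noteq> y\<close> \<open>j \<noteq> y\<close>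
    by (simp_all add: Transposition.transpose_def I_def)
  then have c2: "c2 \<in> gen (insert a G)"
    unfolding c2_def using transpose_out_of_image_in_gen[OF c1 ck1 _ xy(1)] by blast
  have "j \<in> c2 ` {1..n}" "y \<notin> c2 ` {1..n}"
    unfolding I2 I1 in_transpose_image_iff using x j(2) \<open>x \<noteq> y\<close> \<open>j \<noteq> x\<close> \<open>j \<noteq> y\<close>
    by (simp_all add: Transposition.transpose_def I_def)
  then have "Transposition.transpose j y \<circ> c2 \<in> gen (insert a G)"
    using transpose_out_of_image_in_gen[OF c2 ck2 _ xy(2)] by blast
  moreover have "Transposition.transpose j y \<circ> Transposition.transpose y x \<circ> Transposition.transpose x j
      = Transposition.transpose x y"
    using \<open>x \<noteq> y\<close> \<open>j \<noteq> x\<close> \<open>j \<noteq> y\<close> by (auto simp: fun_eq_iff Transposition.transpose_def)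
  ultimately show ?thesis unfolding c2_def c1_def by (metis comp_assoc)
qed

lemma transpose_comp_in_gen:
  assumes c: "c \<in> gen (insert a G)" and ck: "card (c ` {1..n}) = card (a ` {1..n})"
    and x: "x \<in> {1..n}" and y: "y \<in> {1..n}"
  shows "Transposition.transpose x y \<circ> c \<in> gen (insert a G)"
proof -
  consider "x \<in> c ` {1..n}" "y \<in> c ` {1..n}" | "x \<in> c ` {1..n}" "y \<notin> c ` {1..n}"
    | "x \<notin> c ` {1..n}" "y \<in> c ` {1..n}" | "x \<notin> c ` {1..n}" "y \<notin> c ` {1..n}"
    by blast
  then show ?thesis
  proof cases
    case 1
    then show ?thesis
      using transpose_within_image_in_gen[OF c ck] c by (cases "x = y") simp_all
  next
    case 2
    then show ?thesis using transpose_out_of_image_in_gen[OF c ck] y by blast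
  next
    case 3
    then have "Transposition.transpose y x \<circ> c \<in> gen (insert a G)"
      using transpose_out_of_image_in_gen[OF c ck] x by blast
    then show ?thesis by (simp add: transpose_commute)
  next
    case 4
    have "Transposition.transpose x y \<circ> c = c"
    proof
      fix z show "(Transposition.transpose x y \<circ> c) z = c z"
      proof (cases "z \<in> {1..n}")
        case True
        then have "c z \<noteq> x" "c z \<noteq> y" using 4 by auto
        then show ?thesis by simp
      next
        case False
        then have "c z = z" using Tn_outside c gen_subset_Tn[OF insert_a_G_subset_Tn] by blast
        then show ?thesis using False x y by auto
      qed
    qed
    then show ?thesis using c by simp
  qed
qed

lemma permutes_comp_in_gen:
  assumes p: "p permutes {1..n}" and c: "c \<in> gen (insert a G)"
    and ck: "card (c ` {1..n}) = card (a ` {1..n})"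
  shows "p \<circ> c \<in> gen (insert a G)"
  using p finite_atLeastAtMost
proof (induction rule: permutes_induct)
  case id
  then show ?case using c by simp
next
  case (swap x y p)
  have "card ((p \<circ> c) ` {1..n}) = card (a ` {1..n})"
    unfolding card_image_comp_inj[OF permutes_inj[OF swap.hyps(4)]] by (rule ck)
  then have "Transposition.transpose x y \<circ> (p \<circ> c) \<in> gen (insert a G)"
    by (rule transpose_comp_in_gen[OF swap.IH _ swap.hyps(1,2)])
  then show ?case by (simp only: comp_assoc)
qed

lemma perm_a_perm_in_gen:
  assumes \<sigma>: "\<sigma> permutes {1..n}" and \<tau>: "\<tau> permutes {1..n}"
  shows "\<sigma> \<circ> a \<circ> \<tau> \<in> gen (insert a G)"
proof -
  obtain g where g: "g \<in> G" "kernel_classes n (a \<circ> g) = kernel_classes n (a \<circ> \<tau>)"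
    by (rule kernel_orbit_if_lambda_homogeneous[OF subgroup lambda_homogeneous \<tau>])
  have "a \<circ> \<tau> \<in> Tn n" "a \<circ> g \<in> Tn n"
    using Tn_comp a_in_Tn permutes_in_Tn[OF \<tau>] permutes_in_Tn[OF G_permutes[OF g(1)]] by blast+
  then obtain \<pi> where \<pi>: "\<pi> permutes {1..n}" "a \<circ> \<tau> = \<pi> \<circ> (a \<circ> g)"
    using permutes_comp_if_same_kernel g(2)[symmetric] by metis
  have "a \<circ> g \<in> gen (insert a G)" using g(1) by (intro gen.comp gen.base) auto
  moreover have "card ((a \<circ> g) ` {1..n}) = card (a ` {1..n})"
    unfolding image_comp[symmetric] permutes_image[OF G_permutes[OF g(1)]] ..
  ultimately have "(\<sigma> \<circ> \<pi>) \<circ> (a \<circ> g) \<in> gen (insert a G)"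
    by (rule permutes_comp_in_gen[OF permutes_compose[OF \<pi>(1) \<sigma>]])
  then show ?thesis using \<pi>(2) by (simp add: comp_assoc)
qed

lemma gen_minus_Sn_subset: "gen (insert a (Sn n)) - Sn n \<subseteq> gen (insert a G) - G"
proof -
  let ?M = "{f. \<forall>\<sigma> \<tau>. \<sigma> permutes {1..n} \<longrightarrow> \<tau> permutes {1..n} \<longrightarrow> \<sigma> \<circ> f \<circ> \<tau> \<in> gen (insert a G)}"
  have "gen (insert a (Sn n)) \<subseteq> Sn n \<union> ?M"
  proof (rule gen_insert_subset)
    show "p \<circ> q \<in> Sn n" if "p \<in> Sn n" "q \<in> Sn n" for p q
      using that permutes_compose by (auto simp: Sn_def)
    show "a \<in> ?M" using perm_a_perm_in_gen by blast
  next
    fix p f assume "p \<in> Sn n" "f \<in> ?M"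
    then have p: "p permutes {1..n}" by (simp add: Sn_def)
    show "p \<circ> f \<in> ?M"
    proof (intro CollectI allI impI)
      fix \<sigma> \<tau> assume "\<sigma> permutes {1..n}" "\<tau> permutes {1..n}"
      then have "(\<sigma> \<circ> p) \<circ> f \<circ> \<tau> \<in> gen (insert a G)"
        using \<open>f \<in> ?M\<close> permutes_compose[OF p] by blast
      then show "\<sigma> \<circ> (p \<circ> f) \<circ> \<tau> \<in> gen (insert a G)" by (simp add: comp_assoc)
    qed
    show "f \<circ> p \<in> ?M"
    proof (intro CollectI allI impI)
      fix \<sigma> \<tau> assume "\<sigma> permutes {1..n}" "\<tau> permutes {1..n}"
      then have "\<sigma> \<circ> f \<circ> (p \<circ> \<tau>) \<in> gen (insert a G)"
        using \<open>f \<in> ?M\<close> permutes_compose[OF _ p] by blast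
      then show "\<sigma> \<circ> (f \<circ> p) \<circ> \<tau> \<in> gen (insert a G)" by (simp add: comp_assoc)
    qed
  next
    fix f f' assume "f \<in> ?M" "f' \<in> ?M"
    show "f \<circ> f' \<in> ?M"
    proof (intro CollectI allI impI)
      fix \<sigma> \<tau> assume "\<sigma> permutes {1..n}" "\<tau> permutes {1..n}"
      then have "(\<sigma> \<circ> f \<circ> id) \<circ> (id \<circ> f' \<circ> \<tau>) \<in> gen (insert a G)"
        using \<open>f \<in> ?M\<close> \<open>f' \<in> ?M\<close> permutes_id by (blast intro: gen.comp)
      then show "\<sigma> \<circ> (f \<circ> f') \<circ> \<tau> \<in> gen (insert a G)" by (simp add: comp_assoc)
    qed
  qed
  then show ?thesis using G_subset_Sn permutes_id by fastforce
qed

end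

theorem theorem5p3:
  fixes n k :: nat and a :: "nat \<Rightarrow> nat" and G :: "(nat \<Rightarrow> nat) set" and lam :: "nat list"
  assumes "a \<in> Tn n - Sn n"
    and "rank n a = k"
    and "kernel_type n a = lam"
    and "is_subgroup_Sn n G"
  shows "Sn_pair n a G \<longleftrightarrow> k_homogeneous n k G \<and> lambda_homogeneous n lam G"
proof -
  interpret singular_map_group n a G
    using assms(1,4) by unfold_locales auto
  have k: "k = card (a ` {1..n})" and lam: "lam = kernel_type n a"
    using assms(2,3) by (simp_all add: rank_def)
  show ?thesis
  proof
    assume "Sn_pair n a G"
    then show "k_homogeneous n k G \<and> lambda_homogeneous n lam G"
      using Sn_pair_k_homogeneous Sn_pair_lambda_homogeneous k lam by blast
  next
    assume "k_homogeneous n k G \<and> lambda_homogeneous n lam G"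
    then interpret homogeneous_pair n a G
      using k lam by unfold_locales simp_all
    show "Sn_pair n a G"
      unfolding Sn_pair_def using gen_minus_G_subset gen_minus_Sn_subset by blast
  qed
qed

end
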